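(* Let $n,d,a$ be positive integers, $g:=\gcd(d,n)$, and assume $a\ge \frac{(n-g)(d-g)}{g}$. Then $(n,d,a)$ is bad if and only if $g\nmid a$.
   Context: Let $R=\mathbb{C}[x_1,\dots,x_n]$ with $\mathfrak{S}_n$ permuting the variables and $R_a^{\mathfrak{S}_n}$ the symmetric polynomials homogeneous of degree $a$. A triple $(n,d,a)$ of positive integers is good if there exists $f\in R_a^{\mathfrak{S}_n}$ such that $x_1^d-x_n^d,\dots,x_{n-1}^d-x_n^d,f$ is a regular sequence (equivalently, $f$ has no zero on $\mathcal{V}_d=\{(z_1,\dots,z_n)\in\mathbb{C}^n: z_i^d=1\ \forall i,\ z_n=1\}$); otherwise it is bad. *)

theory Defs
  imports "HOL-Combinatorics.Permutations" Complex_Main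
begin

text \<open>Polynomials in n variables x_0,...,x_(n-1) are encoded by coefficient functions on
exponent vectors. A homogeneous polynomial of degree a is a coefficient function restricted
to the (finite) set of exponent vectors supported in {..<n} of total degree a.\<close>

definition monomials :: "nat \<Rightarrow> nat \<Rightarrow> (nat \<Rightarrow> nat) set" where
  "monomials n a = {e. (\<forall>i\<ge>n. e i = 0) \<and> (\<Sum>i<n. e i) = a}"

definition hpoly_eval :: "nat \<Rightarrow> nat \<Rightarrow> ((nat \<Rightarrow> nat) \<Rightarrow> complex) \<Rightarrow> (nat \<Rightarrow> complex) \<Rightarrow> complex" where
  "hpoly_eval n a c z = (\<Sum>e\<in>monomials n a. c e * (\<Prod>i<n. z i ^ e i))"

definition symmetric_coeffs :: "nat \<Rightarrow> nat \<Rightarrow> ((nat \<Rightarrow> nat) \<Rightarrow> complex) \<Rightarrow> bool" where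
  "symmetric_coeffs n a c \<longleftrightarrow>
     (\<forall>\<sigma>. \<sigma> permutes {..<n} \<longrightarrow> (\<forall>e\<in>monomials n a. c (e \<circ> \<sigma>) = c e))"

text \<open>V_d = {z in C^n : z_i^d = 1 for all i, z_n = 1} (last variable is x_(n-1) here).\<close>
definition V_set :: "nat \<Rightarrow> nat \<Rightarrow> (nat \<Rightarrow> complex) set" where
  "V_set n d = {z. (\<forall>i<n. z i ^ d = 1) \<and> z (n - 1) = 1 \<and> (\<forall>i\<ge>n. z i = 0)}"

definition good_triple :: "nat \<Rightarrow> nat \<Rightarrow> nat \<Rightarrow> bool" where
  "good_triple n d a \<longleftrightarrow>
     (\<exists>c. symmetric_coeffs n a c \<and> (\<forall>z\<in>V_set n d. hpoly_eval n a c z \<noteq> 0))"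

definition bad_triple :: "nat \<Rightarrow> nat \<Rightarrow> nat \<Rightarrow> bool" where
  "bad_triple n d a \<longleftrightarrow> \<not> good_triple n d a"

end

theory Submission
  imports Defs "HOL-Library.Real_Mod"
begin

text \<open>
  If \<open>g = gcd d n\<close> does not divide \<open>a\<close>, take a primitive \<open>g\<close>-th root of unity \<open>w\<close> and the point
  \<open>z = (w, w\<^sup>2, \<dots>, w\<^sup>n) \<in> V\<^sub>d\<close>. Cyclically permuting its coordinates multiplies it by \<open>w\<close>, so
  every symmetric form \<open>f\<close> of degree \<open>a\<close> satisfies \<open>f(z) = w\<^sup>a f(z)\<close> with \<open>w\<^sup>a \<noteq> 1\<close>, whence
  \<open>f(z) = 0\<close>. Conversely, if \<open>g\<close> divides \<open>a\<close> and \<open>a\<close> is above the bound, then \<open>a/g\<close> exceeds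
  the Frobenius number of the coprime pair \<open>(n/g, d/g)\<close>, so \<open>a = i n + j d\<close>. On \<open>V\<^sub>d\<close> a monomial
  depends only on its exponents modulo \<open>d\<close>, so the sum of all degree-\<open>a\<close> monomials whose exponents
  are all \<open>\<equiv> i (mod d)\<close> equals their number times \<open>\<Prod> z\<^sub>l\<^sup>i \<noteq> 0\<close>, and there is at least one
  such monomial, \<open>x\<^sub>1\<^sup>i\<^sup>+\<^sup>d\<^sup>j x\<^sub>2\<^sup>i \<cdots> x\<^sub>n\<^sup>i\<close>.
\<close>

lemma power_eq_power_mod:
  fixes w :: "'a::monoid_mult"
  assumes "w ^ d = 1"
  shows "w ^ k = w ^ (k mod d)"
proof -
  have "w ^ k = w ^ (d * (k div d) + k mod d)" by simp
  also have "\<dots> = (w ^ d) ^ (k div d) * w ^ (k mod d)" by (simp only: power_add power_mult)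
  finally show ?thesis using assms by simp
qed

lemma exists_primitive_root_of_unity:
  assumes "g > 0"
  shows "\<exists>w::complex. \<forall>k. w ^ k = 1 \<longleftrightarrow> g dvd k"
proof (intro exI allI)
  fix k
  let ?w = "cis (2 * pi / real g)"
  have pow: "?w ^ k = cis (2 * pi * real k / real g)"
    by (simp add: DeMoivre mult.commute)
  show "?w ^ k = 1 \<longleftrightarrow> g dvd k"
  proof
    assume "?w ^ k = 1"
    then obtain m where "2 * pi * real k / real g = of_int m * (2 * pi)"
      by (auto simp: pow cis_eq_1_iff)
    then have "real k = of_int m * real g" using assms by (simp add: field_simps)
    then have "int k = m * int g" by (metis of_int_eq_iff of_int_mult of_int_of_nat_eq)
    then show "g dvd k" by (metis dvd_triv_right int_dvd_int_iff)
  next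
    assume "g dvd k"
    then obtain t where "k = g * t" by blast
    then have "2 * pi * real k / real g = of_int (int t) * (2 * pi)" using assms by simp
    then show "?w ^ k = 1" unfolding pow cis_eq_1_iff by blast
  qed
qed

lemma sum_of_multiples_if_coprime:
  fixes p q m :: nat
  assumes "coprime q p" "p > 0" "q > 0" "m \<ge> (p - 1) * (q - 1)"
  shows "\<exists>i j. m = i * p + j * q"
proof -
  obtain x y where "q * x = p * y + gcd q p" using bezout_nat[of q p] assms(3) by auto
  with assms(1) have xy: "q * x = p * y + 1" by simp
  define j where "j = (x * m) mod p"
  \<comment> \<open>\<open>x\<close> inverts \<open>q\<close> modulo \<open>p\<close>, so \<open>j q \<equiv> m (mod p)\<close> with \<open>j < p\<close>; the bound on \<open>m\<close> then forces \<open>j q \<le> m\<close>.\<close>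
  have "(j * q) mod p = (x * m * q) mod p" by (simp add: j_def mod_mult_left_eq)
  also have "x * m * q = m + p * (m * y)" using xy
    by (metis add.commute mult.commute mult.left_commute nat_mult_1_right distrib_left)
  finally have jq: "(j * q) mod p = m mod p" by simp
  have "j * q \<le> m"
  proof (rule ccontr)
    assume "\<not> j * q \<le> m"
    then have "p dvd j * q - m" "j * q - m > 0"
      using jq mod_eq_dvd_iff_nat[of m "j * q" p] by simp_all
    then have "p \<le> j * q - m" by (simp add: dvd_imp_le)
    moreover have "j < p" using assms(2) by (simp add: j_def)
    then have "j * q \<le> (p - 1) * q" by (intro mult_right_mono) linarith+
    moreover have "(p - 1) * q = (p - 1) * (q - 1) + (p - 1)"
      using assms(3) by (cases q) simp_all
    ultimately show False using assms(2,4) \<open>\<not> j * q \<le> m\<close> by linarith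
  qed
  with jq obtain i where "m - j * q = p * i"
    using mod_eq_dvd_iff_nat[of "j * q" m p] by (auto elim!: dvdE)
  with \<open>j * q \<le> m\<close> have "m = i * p + j * q" by (simp add: mult.commute)
  then show ?thesis by blast
qed

lemma sum_of_multiples_if_gcd_dvd:
  fixes n d a :: nat
  assumes "n > 0" "d > 0" "gcd d n dvd a"
    and "a * gcd d n \<ge> (n - gcd d n) * (d - gcd d n)"
  shows "\<exists>i j. a = i * n + j * d"
proof -
  define g where "g = gcd d n"
  have "g > 0" using assms(1) by (simp add: g_def)
  then obtain q p where q: "d = q * g" and p: "n = p * g" and "coprime q p"
    using gcd_coprime_exists[of d n] unfolding g_def by blast
  obtain m where m: "a = m * g" using assms(3) unfolding g_def by (metis dvdE mult.commute)
  have "p > 0" "q > 0" using p q assms(1,2) by (metis mult_0 gr0I)+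
  have "n - g = g * (p - 1)" "d - g = g * (q - 1)"
    using p q by (simp_all add: right_diff_distrib' mult.commute)
  moreover have "(n - g) * (d - g) \<le> a * g" using assms(4) by (simp add: g_def)
  ultimately have "(g * g) * ((p - 1) * (q - 1)) \<le> (g * g) * m"
    unfolding m by (simp add: ac_simps)
  then have "m \<ge> (p - 1) * (q - 1)" using \<open>g > 0\<close> by simp
  then obtain i j where "m = i * p + j * q"
    using sum_of_multiples_if_coprime \<open>coprime q p\<close> \<open>p > 0\<close> \<open>q > 0\<close> by blast
  then have "a = i * n + j * d" using m p q by (simp add: algebra_simps)
  then show ?thesis by blast
qed

lemma finite_monomials: "finite (monomials n a)"
proof -
  let ?extend = "\<lambda>f i. if i < n then f i else 0"
  have "monomials n a \<subseteq> ?extend ` (PiE {..<n} (\<lambda>_. {..a}))"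
  proof
    fix e assume e: "e \<in> monomials n a"
    have "e i \<le> a" if "i < n" for i
      using member_le_sum[of i "{..<n}" e] that e by (simp add: monomials_def)
    then have "restrict e {..<n} \<in> PiE {..<n} (\<lambda>_. {..a})" by auto
    moreover have "e = ?extend (restrict e {..<n})"
      using e by (auto simp: monomials_def fun_eq_iff)
    ultimately show "e \<in> ?extend ` (PiE {..<n} (\<lambda>_. {..a}))" by blast
  qed
  then show ?thesis by (rule finite_subset) (intro finite_imageI finite_PiE; simp)
qed

lemma hpoly_eval_mult_const:
  "hpoly_eval n a c (\<lambda>l. w * z l) = w ^ a * hpoly_eval n a c z"
proof -
  have "(\<Prod>i<n. (w * z i) ^ e i) = w ^ a * (\<Prod>i<n. z i ^ e i)" if "e \<in> monomials n a" for e
  proof -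
    have "(\<Prod>i<n. (w * z i) ^ e i) = w ^ (\<Sum>i<n. e i) * (\<Prod>i<n. z i ^ e i)"
      by (simp add: power_mult_distrib prod.distrib power_sum)
    then show ?thesis using that by (simp add: monomials_def)
  qed
  then show ?thesis
    unfolding hpoly_eval_def by (simp add: sum_distrib_left algebra_simps cong: sum.cong)
qed

lemma monomials_comp_permutes:
  assumes "\<sigma> permutes {..<n}" "e \<in> monomials n a"
  shows "e \<circ> \<sigma> \<in> monomials n a"
proof -
  have "(\<Sum>i<n. e (\<sigma> i)) = (\<Sum>i<n. e i)"
    using sum.permute[OF assms(1), of e] by (simp add: comp_def)
  moreover have "\<forall>i\<ge>n. e (\<sigma> i) = 0" using assms by (auto simp: permutes_def monomials_def)
  ultimately show ?thesis using assms(2) by (simp add: monomials_def)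
qed

lemma hpoly_eval_comp_permutes:
  assumes sym: "symmetric_coeffs n a c" and \<sigma>: "\<sigma> permutes {..<n}"
  shows "hpoly_eval n a c (z \<circ> \<sigma>) = hpoly_eval n a c z"
proof -
  let ?M = "monomials n a"
  have bij: "bij_betw (\<lambda>e. e \<circ> \<sigma>) ?M ?M"
  proof (rule bij_betw_byWitness[where f' = "\<lambda>e. e \<circ> inv \<sigma>"])
    show "\<forall>e\<in>?M. e \<circ> \<sigma> \<circ> inv \<sigma> = e"
      using \<sigma> by (auto simp: fun_eq_iff permutes_inverses(1))
    show "\<forall>e\<in>?M. e \<circ> inv \<sigma> \<circ> \<sigma> = e"
      using \<sigma> by (auto simp: fun_eq_iff permutes_inverses(2))
    show "(\<lambda>e. e \<circ> \<sigma>) ` ?M \<subseteq> ?M" using monomials_comp_permutes[OF \<sigma>] by auto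
    show "(\<lambda>e. e \<circ> inv \<sigma>) ` ?M \<subseteq> ?M"
      using monomials_comp_permutes[OF permutes_inv[OF \<sigma>]] by auto
  qed
  have "hpoly_eval n a c (z \<circ> \<sigma>) = (\<Sum>e\<in>?M. c (e \<circ> \<sigma>) * (\<Prod>i<n. z (\<sigma> i) ^ e (\<sigma> i)))"
    using sum.reindex_bij_betw[OF bij, of "\<lambda>e. c e * (\<Prod>i<n. z (\<sigma> i) ^ e i)"]
    by (simp add: hpoly_eval_def)
  also have "\<dots> = (\<Sum>e\<in>?M. c e * (\<Prod>i<n. z i ^ e i))"
  proof (rule sum.cong[OF refl])
    fix e assume "e \<in> ?M"
    then have "c (e \<circ> \<sigma>) = c e" using sym \<sigma> by (simp add: symmetric_coeffs_def)
    moreover have "(\<Prod>i<n. z (\<sigma> i) ^ e (\<sigma> i)) = (\<Prod>i<n. z i ^ e i)"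
      using prod.permute[OF \<sigma>, of "\<lambda>i. z i ^ e i"] by (simp add: comp_def)
    ultimately show "c (e \<circ> \<sigma>) * (\<Prod>i<n. z (\<sigma> i) ^ e (\<sigma> i)) = c e * (\<Prod>i<n. z i ^ e i)"
      by simp
  qed
  finally show ?thesis by (simp add: hpoly_eval_def)
qed

lemma hpoly_eval_eq_0_if_permutes_eq_mult:
  assumes "symmetric_coeffs n a c" "\<sigma> permutes {..<n}"
    and "z \<circ> \<sigma> = (\<lambda>l. w * z l)" and "w ^ a \<noteq> 1"
  shows "hpoly_eval n a c z = 0"
proof -
  have "w ^ a * hpoly_eval n a c z = hpoly_eval n a c z"
    using hpoly_eval_mult_const[of n a c w z] hpoly_eval_comp_permutes[OF assms(1,2), of z] assms(3)
    by simp
  then have "(w ^ a - 1) * hpoly_eval n a c z = 0" by (simp add: algebra_simps)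
  with assms(4) show ?thesis by simp
qed

lemma cyclic_shift_permutes:
  assumes "n > 0"
  shows "(\<lambda>l. if l < n then (if Suc l = n then 0 else Suc l) else l) permutes {..<n}"
  using assms
  by (intro bij_imp_permutes
        bij_betw_byWitness[where f' = "\<lambda>l. if l < n then (if l = 0 then n - 1 else l - 1) else l"])
     auto

lemma bad_triple_if_not_gcd_dvd:
  assumes "n > 0" "\<not> gcd d n dvd a"
  shows "bad_triple n d a"
  unfolding bad_triple_def good_triple_def
proof clarify
  fix c assume sym: "symmetric_coeffs n a c" and nz: "\<forall>z\<in>V_set n d. hpoly_eval n a c z \<noteq> 0"
  obtain w :: complex where w: "\<And>k. w ^ k = 1 \<longleftrightarrow> gcd d n dvd k"
    using exists_primitive_root_of_unity[of "gcd d n"] assms(1) by auto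
  define z where "z = (\<lambda>l. if l < n then w ^ Suc l else 0)"
  have "(w ^ Suc l) ^ d = 1" for l
    unfolding power_mult[symmetric] w by simp
  then have "z \<in> V_set n d"
    using assms(1) w[of n] by (simp add: V_set_def z_def)
  moreover have "z \<circ> (\<lambda>l. if l < n then (if Suc l = n then 0 else Suc l) else l) = (\<lambda>l. w * z l)"
    using w[of n] by (auto simp: z_def fun_eq_iff)
  ultimately show False
    using hpoly_eval_eq_0_if_permutes_eq_mult[OF sym cyclic_shift_permutes[OF assms(1)]]
      w[of a] assms(2) nz by blast
qed

lemma symmetric_coeffs_congruent_exponents:
  "symmetric_coeffs n a (\<lambda>e. if \<forall>l<n. e l mod d = r then 1 else 0)"
  unfolding symmetric_coeffs_def
proof (intro allI impI ballI)
  fix \<sigma> e assume \<sigma>: "\<sigma> permutes {..<n}"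
  have "(\<forall>l\<in>{..<n}. e (\<sigma> l) mod d = r) \<longleftrightarrow> (\<forall>l\<in>\<sigma> ` {..<n}. e l mod d = r)" by simp
  also have "\<sigma> ` {..<n} = {..<n}" by (rule permutes_image[OF \<sigma>])
  finally have "(\<forall>l<n. e (\<sigma> l) mod d = r) \<longleftrightarrow> (\<forall>l<n. e l mod d = r)" by auto
  then show "(if \<forall>l<n. (e \<circ> \<sigma>) l mod d = r then 1 else 0) =
             (if \<forall>l<n. e l mod d = r then 1 else (0::complex))" by (simp only: comp_apply)
qed

lemma hpoly_eval_congruent_exponents:
  assumes "\<And>l. l < n \<Longrightarrow> z l ^ d = 1"
  shows "hpoly_eval n a (\<lambda>e. if \<forall>l<n. e l mod d = r then 1 else 0) z =
    of_nat (card {e \<in> monomials n a. \<forall>l<n. e l mod d = r}) * (\<Prod>l<n. z l ^ r)"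
proof -
  let ?P = "\<lambda>e. \<forall>l<n. e l mod d = r"
  have "(\<Prod>l<n. z l ^ e l) = (\<Prod>l<n. z l ^ r)" if "?P e" for e
  proof (rule prod.cong[OF refl])
    fix l assume "l \<in> {..<n}"
    then have "z l ^ e l = z l ^ (e l mod d)" using assms by (intro power_eq_power_mod) simp
    also have "e l mod d = r" using that \<open>l \<in> {..<n}\<close> by simp
    finally show "z l ^ e l = z l ^ r" .
  qed
  then have "hpoly_eval n a (\<lambda>e. if ?P e then 1 else 0) z =
      (\<Sum>e\<in>monomials n a. if ?P e then (\<Prod>l<n. z l ^ r) else 0)"
    unfolding hpoly_eval_def by (intro sum.cong) auto
  also have "\<dots> = of_nat (card {e \<in> monomials n a. ?P e}) * (\<Prod>l<n. z l ^ r)"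
    by (simp add: sum.inter_filter[OF finite_monomials, symmetric])
  finally show ?thesis .
qed

lemma good_triple_if_sum_of_multiples:
  assumes "n > 0" "d > 0" "a = i * n + j * d"
  shows "good_triple n d a"
proof -
  let ?P = "\<lambda>e. \<forall>l<n. e l mod d = i mod d"
  define e0 where "e0 = (\<lambda>l. (if l < n then i else 0) + (if l = 0 then d * j else 0))"
  have "(\<Sum>l<n. e0 l) = n * i + d * j"
    using assms(1) by (simp add: e0_def sum.distrib)
  then have "e0 \<in> {e \<in> monomials n a. ?P e}"
    using assms(3) by (auto simp: monomials_def e0_def)
  then have card: "card {e \<in> monomials n a. ?P e} \<noteq> 0"
    using finite_monomials[of n a] by (auto simp: card_eq_0_iff)
  have "hpoly_eval n a (\<lambda>e. if ?P e then 1 else 0) z \<noteq> 0" if "z \<in> V_set n d" for z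
  proof -
    have root: "z l ^ d = 1" if "l < n" for l using \<open>z \<in> V_set n d\<close> that by (simp add: V_set_def)
    then have "z l \<noteq> 0" if "l < n" for l
      using assms(2) that by (metis zero_power zero_neq_one)
    with root show ?thesis
      using card hpoly_eval_congruent_exponents[of n z d a "i mod d"] by simp
  qed
  then show ?thesis
    unfolding good_triple_def using symmetric_coeffs_congruent_exponents by blast
qed

theorem proposition3p16:
  fixes n d a :: nat
  assumes "n > 0" and "d > 0" and "a > 0"
    and "real a \<ge> real ((n - gcd d n) * (d - gcd d n)) / real (gcd d n)"
  shows "bad_triple n d a \<longleftrightarrow> \<not> (gcd d n dvd a)"
proof (cases "gcd d n dvd a")
  case True
  have "real ((n - gcd d n) * (d - gcd d n)) \<le> real (a * gcd d n)"
    using assms(1,4) by (simp add: divide_le_eq)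
  then obtain i j where "a = i * n + j * d"
    using sum_of_multiples_if_gcd_dvd assms(1,2) True of_nat_le_iff by blast
  then show ?thesis
    using good_triple_if_sum_of_multiples assms(1,2) True by (simp add: bad_triple_def)
next
  case False
  then show ?thesis using bad_triple_if_not_gcd_dvd assms(1) by simp
qed

end
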